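(* There exists a family of connected bipartite graphs $(G_N)_{N\ge 4}$ with $|V(G_N)|=N$, $\Delta(G_N)\le N-2<N-1$, and $\hat r_\infty(G_N)\to 1$ as $N\to\infty$.
   Context: All graphs are finite and simple; a graph is nonempty if it has at least one edge. $\Delta$ is maximum degree, $tK_2$ is a matching with $t$ edges. For graphs $F,G,H$, $F\to(G,H)$ means every red--blue coloring of $E(F)$ contains a red copy of $G$ or a blue copy of $H$, and $\hat r(G,H)=\min\{|E(F)|:F\to(G,H)\}$. For a nonempty graph $G$, $\hat r_\infty(G)=\lim_{t\to\infty}\frac{\hat r(tK_2,G)}{t\,|E(G)|}$ (this limit exists). *)

theory Defs
  imports Complex_Main
begin

type_synonym 'a graph = "'a set \<times> 'a set set"

definition verts :: "'a graph \<Rightarrow> 'a set" where "verts G = fst G"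
definition edges :: "'a graph \<Rightarrow> 'a set set" where "edges G = snd G"

definition simple_graph :: "'a graph \<Rightarrow> bool" where
  "simple_graph G \<longleftrightarrow> finite (verts G) \<and>
     (\<forall>e\<in>edges G. \<exists>u v. e = {u, v} \<and> u \<noteq> v \<and> u \<in> verts G \<and> v \<in> verts G)"

definition degree :: "'a graph \<Rightarrow> 'a \<Rightarrow> nat" where
  "degree G v = card {e \<in> edges G. v \<in> e}"

definition max_degree :: "'a graph \<Rightarrow> nat" where
  "max_degree G = Max (insert 0 (degree G ` verts G))"

definition adj_rel :: "'a graph \<Rightarrow> ('a \<times> 'a) set" where
  "adj_rel G = {(u, v). {u, v} \<in> edges G}"

definition connected_graph :: "'a graph \<Rightarrow> bool" where
  "connected_graph G \<longleftrightarrow> verts G \<noteq> {} \<and>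
     (\<forall>u\<in>verts G. \<forall>v\<in>verts G. (u, v) \<in> (adj_rel G)\<^sup>*)"

definition bipartite :: "'a graph \<Rightarrow> bool" where
  "bipartite G \<longleftrightarrow> (\<exists>A \<subseteq> verts G. \<forall>e\<in>edges G. card (e \<inter> A) = 1)"

definition has_copy :: "'b graph \<Rightarrow> 'a set \<Rightarrow> 'a set set \<Rightarrow> bool" where
  "has_copy H V' E' \<longleftrightarrow> (\<exists>f. inj_on f (verts H) \<and> f ` verts H \<subseteq> V' \<and>
      (\<forall>e\<in>edges H. f ` e \<in> E'))"

text \<open>F \<rightarrow> (G, H): every red-blue colouring (R = red edges) gives red G or blue H.\<close>
definition arrows :: "'a graph \<Rightarrow> 'b graph \<Rightarrow> 'c graph \<Rightarrow> bool" where
  "arrows F G H \<longleftrightarrow> (\<forall>R \<subseteq> edges F.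
      has_copy G (verts F) R \<or> has_copy H (verts F) (edges F - R))"

text \<open>Size Ramsey number; host graphs F range over finite simple graphs on
  natural-number vertices (every finite graph has such an isomorphic copy).\<close>
definition size_ramsey :: "'b graph \<Rightarrow> 'c graph \<Rightarrow> nat" where
  "size_ramsey G H = (LEAST m. \<exists>F :: nat graph. simple_graph F \<and> arrows F G H \<and>
      card (edges F) = m)"

definition matching :: "nat \<Rightarrow> nat graph" where
  "matching t = ({0..<2*t}, {{2*i, 2*i+1} | i. i < t})"

definition r_infty :: "'a graph \<Rightarrow> real" where
  "r_infty G = lim (\<lambda>t. real (size_ramsey (matching t) G) / (real t * real (card (edges G))))"

end

theory Submission
  imports Defs
begin

(* Write Delta and e for the maximum degree and the number of edges of H.
   If F arrows (tK_2, H) with t > 0, colouring no edge red yields a copy of H in F, so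
   some vertex v of F has degree at least Delta.  Colouring the edges at v red, a red
   matching uses at most one of them, so F without the edges at v arrows ((t-1)K_2, H);
   by induction F has at least t * Delta edges.  Conversely t disjoint copies of H arrow
   (tK_2, H), and disjoint unions make t -> size_ramsey (tK_2, H) subadditive, so by
   Fekete's lemma the limit defining r_infty H exists, and it lies between Delta / e
   and 1.  The broom (a star K_{1,N-2} with a pendant edge at one leaf) is a connected
   bipartite tree with Delta = N - 2 = e - 1. *)

lemma edge_subset_verts_if_simple: "simple_graph F \<Longrightarrow> e \<in> edges F \<Longrightarrow> e \<subseteq> verts F"
  unfolding simple_graph_def by fastforce

lemma finite_edges_if_simple: "simple_graph F \<Longrightarrow> finite (edges F)"
  using edge_subset_verts_if_simple finite_subset[of "edges F" "Pow (verts F)"]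
  unfolding simple_graph_def by blast

lemma simple_graph_edgeE:
  assumes "simple_graph F" "e \<in> edges F"
  obtains u v where "e = {u, v}" "u \<noteq> v" "u \<in> verts F" "v \<in> verts F"
  using assms unfolding simple_graph_def by blast

lemma has_copy_mono: "has_copy H V E \<Longrightarrow> V \<subseteq> V' \<Longrightarrow> E \<subseteq> E' \<Longrightarrow> has_copy H V' E'"
  unfolding has_copy_def by (meson order_trans subsetD)

lemma has_copy_image:
  assumes "has_copy H V E" "inj g"
  shows "has_copy H (g ` V) (image g ` E)"
proof -
  obtain f where f: "inj_on f (verts H)" "f ` verts H \<subseteq> V" "\<forall>e\<in>edges H. f ` e \<in> E"
    using assms(1) unfolding has_copy_def by blast
  have "inj_on (g \<circ> f) (verts H)"
    using f(1) assms(2) by (simp add: comp_inj_on inj_on_subset)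
  moreover have "(g \<circ> f) ` verts H \<subseteq> g ` V"
    using f(2) by (auto simp: image_comp[symmetric])
  moreover have "(g \<circ> f) ` e \<in> image g ` E" if "e \<in> edges H" for e
    using f(3) that by (auto simp: image_comp[symmetric])
  ultimately show ?thesis unfolding has_copy_def by blast
qed

lemma max_degree_le:
  "finite (verts G) \<Longrightarrow> (\<And>v. v \<in> verts G \<Longrightarrow> degree G v \<le> d) \<Longrightarrow> max_degree G \<le> d"
  unfolding max_degree_def by (subst Max_le_iff) auto

lemma sym_adj_rel: "sym (adj_rel G)"
  unfolding sym_def adj_rel_def by (simp add: insert_commute)

lemma connected_graphI:
  assumes "verts G \<noteq> {}" "\<And>v. v \<in> verts G \<Longrightarrow> (v, c) \<in> (adj_rel G)\<^sup>*"
  shows "connected_graph G"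
  unfolding connected_graph_def
  using assms symD[OF sym_rtrancl[OF sym_adj_rel]] rtrancl_trans by metis

definition is_matching :: "'a set \<Rightarrow> 'a set set \<Rightarrow> bool" where
  "is_matching V M \<longleftrightarrow> finite M \<and> pairwise disjnt M \<and>
     (\<forall>e\<in>M. \<exists>u v. e = {u, v} \<and> u \<noteq> v \<and> u \<in> V \<and> v \<in> V)"

lemma verts_matching: "verts (matching t) = {0..<2*t}"
  by (simp add: matching_def verts_def)

lemma edges_matching: "edges (matching t) = {{2*i, 2*i+1} | i. i < t}"
  by (simp add: matching_def edges_def)

lemma is_matching_subset: "is_matching V M \<Longrightarrow> M' \<subseteq> M \<Longrightarrow> is_matching V M'"
  unfolding is_matching_def by (meson finite_subset pairwise_subset subsetD)

lemma has_copy_matchingD: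
  assumes "has_copy (matching t) V E"
  obtains M where "M \<subseteq> E" "is_matching V M" "card M = t"
proof -
  obtain f where inj: "inj_on f {0..<2*t}" and fV: "f ` {0..<2*t} \<subseteq> V"
    and "\<forall>e\<in>edges (matching t). f ` e \<in> E"
    using assms unfolding has_copy_def verts_matching by blast
  then have fE: "f ` {2*i, 2*i+1} \<in> E" if "i < t" for i
    using that unfolding edges_matching by blast
  define g where "g i = f ` {2*i, 2*i+1}" for i
  have g_disjnt: "disjnt (g i) (g j)" if "i < t" "j < t" "i \<noteq> j" for i j
  proof -
    have "g i \<inter> g j = f ` ({2*i, 2*i+1} \<inter> {2*j, 2*j+1})"
      unfolding g_def using that by (intro inj_on_image_Int[OF inj, symmetric]) auto
    also have "\<dots> = {}" using that by auto
    finally show ?thesis by (simp add: disjnt_def)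
  qed
  have "g ` {..<t} \<subseteq> E" using fE unfolding g_def by blast
  moreover have "is_matching V (g ` {..<t})"
  proof -
    have "pairwise disjnt (g ` {..<t})"
      unfolding pairwise_def using g_disjnt by blast
    moreover have "\<exists>u v. g i = {u, v} \<and> u \<noteq> v \<and> u \<in> V \<and> v \<in> V" if "i < t" for i
    proof -
      have "f (2*i) \<noteq> f (2*i+1)" "f (2*i) \<in> V" "f (2*i+1) \<in> V"
        using that inj_onD[OF inj, of "2*i" "2*i+1"] fV by auto
      then show ?thesis unfolding g_def by auto
    qed
    ultimately show ?thesis unfolding is_matching_def by blast
  qed
  moreover have "inj_on g {..<t}"
    by (rule inj_onI) (use g_disjnt in \<open>fastforce simp: g_def disjnt_def\<close>)
  then have "card (g ` {..<t}) = t" by (simp add: card_image)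
  ultimately show ?thesis by (rule that)
qed

lemma has_copy_matching_if_card_eq:
  assumes "M \<subseteq> E" "is_matching V M" "card M = t"
  shows "has_copy (matching t) V E"
proof -
  obtain h where h: "bij_betw h {..<t} M"
    using assms(2,3) ex_bij_betw_nat_finite[of M] by (auto simp: is_matching_def lessThan_atLeast0)
  obtain a b where ab: "\<And>e. e \<in> M \<Longrightarrow> e = {a e, b e} \<and> a e \<noteq> b e \<and> a e \<in> V \<and> b e \<in> V"
    using assms(2) unfolding is_matching_def by metis
  define f where "f x = (if even x then a else b) (h (x div 2))" for x
  have hM: "h (x div 2) \<in> M" if "x < 2*t" for x
    using that h by (auto simp: bij_betw_def)
  have f_mem: "f x \<in> h (x div 2)" if "x < 2*t" for x
    using ab[OF hM[OF that]] unfolding f_def by auto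
  have "inj_on f {0..<2*t}"
  proof (rule inj_onI)
    fix x y assume x: "x \<in> {0..<2*t}" and y: "y \<in> {0..<2*t}" and "f x = f y"
    then have "\<not> disjnt (h (x div 2)) (h (y div 2))"
      using f_mem[of x] f_mem[of y] by (auto simp: disjnt_def)
    then have "h (x div 2) = h (y div 2)"
      using assms(2) hM x y unfolding is_matching_def pairwise_def by auto
    then have "x div 2 = y div 2"
      using h x y by (auto simp: bij_betw_def inj_on_def)
    moreover have "even x \<longleftrightarrow> even y"
    proof (rule ccontr)
      assume "(even x) \<noteq> (even y)"
      then have "a (h (x div 2)) = b (h (x div 2))"
        using \<open>f x = f y\<close> \<open>x div 2 = y div 2\<close> unfolding f_def by (auto split: if_splits)
      then show False using ab[OF hM] x by auto
    qed
    ultimately show "x = y"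
      by (metis div_mult_mod_eq mod2_eq_if)
  qed
  moreover have "f ` {0..<2*t} \<subseteq> V"
    using ab hM unfolding f_def by auto
  moreover have "f ` {2*i, 2*i+1} \<in> E" if "i < t" for i
  proof -
    have "f ` {2*i, 2*i+1} = h i"
      using ab[OF hM, of "2*i"] that unfolding f_def by auto
    then show ?thesis using hM[of "2*i"] that assms(1) by auto
  qed
  ultimately show ?thesis
    unfolding has_copy_def verts_matching edges_matching by (intro exI[of _ f] conjI) auto
qed

lemma has_copy_matchingI:
  assumes "M \<subseteq> E" "is_matching V M" "t \<le> card M"
  shows "has_copy (matching t) V E"
proof -
  obtain M' where "M' \<subseteq> M" "card M' = t"
    using obtain_subset_with_card_n[OF assms(3)] by blast
  then show ?thesis
    using assms(1,2) is_matching_subset by (intro has_copy_matching_if_card_eq) auto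
qed

lemma is_matching_image:
  assumes "is_matching V M" "inj g"
  shows "is_matching (g ` V) (image g ` M)" "card (image g ` M) = card M"
proof -
  have inj_image: "inj_on (image g) M"
    using assms(2) by (auto intro: inj_onI simp: inj_image_eq_iff)
  have "pairwise disjnt (image g ` M)"
    using assms unfolding is_matching_def pairwise_image
    by (auto simp: pairwise_def disjnt_def image_Int[OF assms(2), symmetric])
  moreover have "\<exists>u v. g ` e = {u, v} \<and> u \<noteq> v \<and> u \<in> g ` V \<and> v \<in> g ` V" if "e \<in> M" for e
    using assms that unfolding is_matching_def by (fastforce simp: inj_eq)
  ultimately show "is_matching (g ` V) (image g ` M)"
    using assms(1) unfolding is_matching_def by blast
  show "card (image g ` M) = card M"
    using inj_image by (rule card_image)
qed

lemma is_matching_Un: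
  assumes "is_matching V1 M1" "is_matching V2 M2" "V1 \<inter> V2 = {}"
  shows "is_matching (V1 \<union> V2) (M1 \<union> M2)" "card (M1 \<union> M2) = card M1 + card M2"
proof -
  have sub: "e \<subseteq> V" "e \<noteq> {}" if "is_matching V M" "e \<in> M" for V M e
    using that unfolding is_matching_def by auto
  have cross: "disjnt e1 e2" if "e1 \<in> M1" "e2 \<in> M2" for e1 e2
    using sub(1)[OF assms(1) that(1)] sub(1)[OF assms(2) that(2)] assms(3)
    by (auto simp: disjnt_def)
  then have "pairwise disjnt (M1 \<union> M2)"
    using assms(1,2) unfolding is_matching_def pairwise_def by (metis Un_iff disjnt_sym)
  moreover have "\<exists>u v. e = {u, v} \<and> u \<noteq> v \<and> u \<in> V1 \<union> V2 \<and> v \<in> V1 \<union> V2"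
    if "e \<in> M1 \<union> M2" for e
    using assms(1,2) that unfolding is_matching_def by (metis UnE UnI1 UnI2)
  ultimately show "is_matching (V1 \<union> V2) (M1 \<union> M2)"
    using assms(1,2) unfolding is_matching_def by simp
  have "M1 \<inter> M2 = {}"
    using cross sub(2)[OF assms(1)] by (fastforce simp: disjnt_def)
  then show "card (M1 \<union> M2) = card M1 + card M2"
    using assms(1,2) unfolding is_matching_def by (simp add: card_Un_disjoint)
qed

lemma arrows_matching_pushforward:
  assumes "arrows F (matching t) H" "inj g" "g ` verts F \<subseteq> V" "image g ` edges F \<subseteq> E"
  obtains M where "M \<subseteq> R" "is_matching (g ` verts F) M" "card M = t"
    | "has_copy H V (E - R)"
proof -
  define R' where "R' = {e \<in> edges F. g ` e \<in> R}"
  have "R' \<subseteq> edges F" unfolding R'_def by blast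
  then consider "has_copy (matching t) (verts F) R'" | "has_copy H (verts F) (edges F - R')"
    using assms(1) unfolding arrows_def by blast
  then show ?thesis
  proof cases
    case 1
    then obtain M where M: "M \<subseteq> R'" "is_matching (verts F) M" "card M = t"
      by (rule has_copy_matchingD)
    have "image g ` M \<subseteq> R" using M(1) unfolding R'_def by blast
    then show ?thesis
      using is_matching_image[OF M(2) assms(2)] M(3) that(1) by simp
  next
    case 2
    have "image g ` (edges F - R') \<subseteq> E - R"
      using assms(4) unfolding R'_def by blast
    then have "has_copy H V (E - R)"
      using has_copy_mono[OF has_copy_image[OF 2 assms(2)] assms(3)] by blast
    then show ?thesis by (rule that(2))
  qed
qed

section \<open>Disjoint unions and the upper bound\<close>

definition disjoint_union :: "nat graph \<Rightarrow> nat graph \<Rightarrow> nat graph" where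
  "disjoint_union F1 F2 = ((\<lambda>x. 2*x) ` verts F1 \<union> (\<lambda>x. 2*x+1) ` verts F2,
     image (\<lambda>x. 2*x) ` edges F1 \<union> image (\<lambda>x. 2*x+1) ` edges F2)"

lemma verts_disjoint_union:
  "verts (disjoint_union F1 F2) = (\<lambda>x. 2*x) ` verts F1 \<union> (\<lambda>x. 2*x+1) ` verts F2"
  by (simp add: disjoint_union_def verts_def)

lemma edges_disjoint_union:
  "edges (disjoint_union F1 F2) = image (\<lambda>x. 2*x) ` edges F1 \<union> image (\<lambda>x. 2*x+1) ` edges F2"
  by (simp add: disjoint_union_def edges_def)

lemma inj_double: "inj (\<lambda>x::nat. 2*x)"
  by (rule injI) simp

lemma inj_double_Suc: "inj (\<lambda>x::nat. 2*x+1)"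
  by (rule injI) simp

lemma double_image_Int_double_Suc_image: "(\<lambda>x::nat. 2*x) ` A \<inter> (\<lambda>x. 2*x+1) ` B = {}"
  by auto presburger

lemma simple_graph_disjoint_union:
  assumes "simple_graph F1" "simple_graph F2"
  shows "simple_graph (disjoint_union F1 F2)"
  using assms unfolding simple_graph_def verts_disjoint_union edges_disjoint_union
  by (fastforce simp: inj_eq[OF inj_double] inj_eq[OF inj_double_Suc])

lemma card_edges_disjoint_union:
  assumes "simple_graph F1" "simple_graph F2"
  shows "card (edges (disjoint_union F1 F2)) = card (edges F1) + card (edges F2)"
proof -
  have "(\<lambda>x::nat. 2*x) ` e1 \<noteq> (\<lambda>x. 2*x+1) ` e2" if e1: "e1 \<in> edges F1" for e1 e2
  proof -
    obtain u v where "e1 = {u, v}" using simple_graph_edgeE[OF assms(1) e1] by blast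
    then have "2*u \<in> (\<lambda>x. 2*x) ` e1 - (\<lambda>x. 2*x+1) ` e2" by auto presburger
    then show ?thesis by blast
  qed
  then have "image (\<lambda>x::nat. 2*x) ` edges F1 \<inter> image (\<lambda>x. 2*x+1) ` edges F2 = {}"
    by blast
  then have "card (edges (disjoint_union F1 F2)) =
      card (image (\<lambda>x::nat. 2*x) ` edges F1) + card (image (\<lambda>x. 2*x+1) ` edges F2)"
    unfolding edges_disjoint_union
    using finite_edges_if_simple[OF assms(1)] finite_edges_if_simple[OF assms(2)]
    by (intro card_Un_disjoint) auto
  moreover have "card (image g ` A) = card A" if "inj g" for g :: "nat \<Rightarrow> nat" and A
    using that by (auto intro!: card_image inj_onI simp: inj_image_eq_iff)
  ultimately show ?thesis
    using inj_double inj_double_Suc by presburger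
qed

lemma arrows_disjoint_union:
  assumes "arrows F1 (matching s) H" "arrows F2 (matching t) H"
  shows "arrows (disjoint_union F1 F2) (matching (s + t)) H"
  unfolding arrows_def
proof (intro allI impI)
  fix R
  let ?V = "verts (disjoint_union F1 F2)" and ?E = "edges (disjoint_union F1 F2)"
  have "(\<lambda>x. 2*x) ` verts F1 \<subseteq> ?V" "image (\<lambda>x. 2*x) ` edges F1 \<subseteq> ?E"
    "(\<lambda>x. 2*x+1) ` verts F2 \<subseteq> ?V" "image (\<lambda>x. 2*x+1) ` edges F2 \<subseteq> ?E"
    unfolding verts_disjoint_union edges_disjoint_union by blast+
  note pushforward = arrows_matching_pushforward[where R = R, OF assms(1) inj_double this(1,2)]
    arrows_matching_pushforward[where R = R, OF assms(2) inj_double_Suc this(3,4)]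
  show "has_copy (matching (s + t)) ?V R \<or> has_copy H ?V (?E - R)"
  proof (rule pushforward(1); rule pushforward(2))
    fix M1 M2
    assume M1: "M1 \<subseteq> R" "is_matching ((\<lambda>x. 2*x) ` verts F1) M1" "card M1 = s"
      and M2: "M2 \<subseteq> R" "is_matching ((\<lambda>x. 2*x+1) ` verts F2) M2" "card M2 = t"
    note M12 = is_matching_Un[OF M1(2) M2(2) double_image_Int_double_Suc_image]
    have "has_copy (matching (s + t)) ?V R"
      using M1(1) M2(1) M12(1)[folded verts_disjoint_union] M12(2) M1(3) M2(3)
      by (intro has_copy_matchingI[of "M1 \<union> M2"]) auto
    then show ?thesis ..
  qed blast+
qed

lemma arrows_matching_0: "arrows F (matching 0) H"
  unfolding arrows_def has_copy_def verts_matching edges_matching by simp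

lemma arrows_matching_1_self:
  assumes "simple_graph H"
  shows "arrows H (matching 1) H"
  unfolding arrows_def
proof (intro allI impI)
  fix R assume R: "R \<subseteq> edges H"
  show "has_copy (matching 1) (verts H) R \<or> has_copy H (verts H) (edges H - R)"
  proof (cases "R = {}")
    case True
    have "has_copy H (verts H) (edges H)"
      unfolding has_copy_def by (intro exI[of _ id]) simp
    then show ?thesis using True by simp
  next
    case False
    then obtain e where e: "e \<in> R" by blast
    with R have "is_matching (verts H) {e}"
      using assms unfolding is_matching_def simple_graph_def by auto
    then show ?thesis
      using e by (intro disjI1 has_copy_matchingI[of "{e}"]) auto
  qed
qed

lemma ex_arrows_matching:
  assumes "simple_graph (H :: nat graph)"
  shows "\<exists>F :: nat graph. simple_graph F \<and> arrows F (matching t) H"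
proof (induction t)
  case 0
  show ?case using assms arrows_matching_0 by blast
next
  case (Suc t)
  then obtain F :: "nat graph" where "simple_graph F" "arrows F (matching t) H" by blast
  then have "simple_graph (disjoint_union F H)" "arrows (disjoint_union F H) (matching (t + 1)) H"
    using assms simple_graph_disjoint_union arrows_disjoint_union arrows_matching_1_self by blast+
  then show ?case by (metis Suc_eq_plus1)
qed

lemma size_ramsey_le:
  "simple_graph (F :: nat graph) \<Longrightarrow> arrows F G H \<Longrightarrow> size_ramsey G H \<le> card (edges F)"
  unfolding size_ramsey_def by (rule Least_le) blast

lemma size_ramsey_matching_attained:
  assumes "simple_graph (H :: nat graph)"
  obtains F :: "nat graph" where "simple_graph F" "arrows F (matching t) H"
    "card (edges F) = size_ramsey (matching t) H"
proof -
  have "\<exists>m. \<exists>F :: nat graph. simple_graph F \<and> arrows F (matching t) H \<and> card (edges F) = m"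
    using ex_arrows_matching[OF assms] by blast
  from LeastI_ex[OF this] show ?thesis
    using that unfolding size_ramsey_def by blast
qed

lemma size_ramsey_matching_add:
  assumes "simple_graph (H :: nat graph)"
  shows "size_ramsey (matching (s + t)) H \<le> size_ramsey (matching s) H + size_ramsey (matching t) H"
proof -
  obtain F1 :: "nat graph" where F1: "simple_graph F1" "arrows F1 (matching s) H"
      "card (edges F1) = size_ramsey (matching s) H"
    using size_ramsey_matching_attained[OF assms] .
  obtain F2 :: "nat graph" where F2: "simple_graph F2" "arrows F2 (matching t) H"
      "card (edges F2) = size_ramsey (matching t) H"
    using size_ramsey_matching_attained[OF assms] .
  have "size_ramsey (matching (s + t)) H \<le> card (edges (disjoint_union F1 F2))"
    using F1 F2 simple_graph_disjoint_union arrows_disjoint_union by (blast intro: size_ramsey_le)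
  also have "\<dots> = size_ramsey (matching s) H + size_ramsey (matching t) H"
    using card_edges_disjoint_union[OF F1(1) F2(1)] F1(3) F2(3) by simp
  finally show ?thesis .
qed

lemma size_ramsey_matching_le:
  assumes "simple_graph (H :: nat graph)"
  shows "size_ramsey (matching t) H \<le> t * card (edges H)"
proof (induction t)
  case 0
  have "simple_graph ({}, {} :: nat set set)"
    by (simp add: simple_graph_def verts_def edges_def)
  from size_ramsey_le[OF this arrows_matching_0] show ?case
    by (simp add: edges_def)
next
  case (Suc t)
  have "size_ramsey (matching (t + 1)) H \<le> size_ramsey (matching t) H + size_ramsey (matching 1) H"
    by (rule size_ramsey_matching_add[OF assms])
  also have "\<dots> \<le> t * card (edges H) + card (edges H)"
    using Suc.IH size_ramsey_le[OF assms arrows_matching_1_self[OF assms]] by simp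
  finally show ?case by simp
qed

section \<open>The lower bound\<close>

definition delete_edges_at :: "'a graph \<Rightarrow> 'a \<Rightarrow> 'a graph" where
  "delete_edges_at F v = (verts F, {e \<in> edges F. v \<notin> e})"

lemma verts_delete_edges_at: "verts (delete_edges_at F v) = verts F"
  by (simp add: delete_edges_at_def verts_def)

lemma edges_delete_edges_at: "edges (delete_edges_at F v) = {e \<in> edges F. v \<notin> e}"
  by (simp add: delete_edges_at_def edges_def)

lemma card_filter_add_card_filter_not:
  "finite A \<Longrightarrow> card {x \<in> A. \<not> P x} + card {x \<in> A. P x} = card A"
  by (subst card_Un_disjoint[symmetric]) (auto intro: arg_cong[where f = card])

lemma card_edges_delete_edges_at:
  "finite (edges F) \<Longrightarrow> card (edges (delete_edges_at F v)) + degree F v = card (edges F)"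
  unfolding edges_delete_edges_at degree_def by (rule card_filter_add_card_filter_not)

lemma card_matching_edges_at_le_1:
  assumes "is_matching V M"
  shows "card {e \<in> M. v \<in> e} \<le> 1"
proof -
  have "e1 = e2" if "e1 \<in> M" "e2 \<in> M" "v \<in> e1" "v \<in> e2" for e1 e2
    using assms that unfolding is_matching_def pairwise_def disjnt_def by blast
  then show ?thesis
    using assms unfolding is_matching_def One_nat_def by (subst card_le_Suc0_iff_eq) auto
qed

lemma arrows_delete_edges_at:
  assumes "arrows F (matching (Suc t)) H"
  shows "arrows (delete_edges_at F v) (matching t) H"
  unfolding arrows_def verts_delete_edges_at
proof (intro allI impI)
  fix R' assume R': "R' \<subseteq> edges (delete_edges_at F v)"
  define R where "R = R' \<union> {e \<in> edges F. v \<in> e}"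
  have "R \<subseteq> edges F" using R' unfolding R_def edges_delete_edges_at by blast
  then consider "has_copy (matching (Suc t)) (verts F) R" | "has_copy H (verts F) (edges F - R)"
    using assms unfolding arrows_def by blast
  then show "has_copy (matching t) (verts F) R' \<or>
      has_copy H (verts F) (edges (delete_edges_at F v) - R')"
  proof cases
    case 1
    then obtain M where M: "M \<subseteq> R" "is_matching (verts F) M" "card M = Suc t"
      by (rule has_copy_matchingD)
    have "card {e \<in> M. v \<notin> e} + card {e \<in> M. v \<in> e} = card M"
      using M(2) unfolding is_matching_def by (intro card_filter_add_card_filter_not) blast
    then have "t \<le> card {e \<in> M. v \<notin> e}"
      using M(3) card_matching_edges_at_le_1[OF M(2), of v] by linarith
    moreover have "{e \<in> M. v \<notin> e} \<subseteq> R'" using M(1) unfolding R_def by blast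
    ultimately have "has_copy (matching t) (verts F) R'"
      using is_matching_subset[OF M(2)] by (intro has_copy_matchingI) auto
    then show ?thesis ..
  next
    case 2
    have "edges F - R \<subseteq> edges (delete_edges_at F v) - R'"
      unfolding R_def edges_delete_edges_at by blast
    with 2 have "has_copy H (verts F) (edges (delete_edges_at F v) - R')"
      by (rule has_copy_mono[OF _ order_refl])
    then show ?thesis ..
  qed
qed

lemma degree_le_degree_of_copy:
  assumes "simple_graph H" "finite (edges F)"
    and "inj_on f (verts H)" "\<forall>e\<in>edges H. f ` e \<in> edges F"
  shows "degree H w \<le> degree F (f w)"
proof -
  have "{e \<in> edges H. w \<in> e} \<subseteq> Pow (verts H)"
    using edge_subset_verts_if_simple[OF assms(1)] by blast
  then have "inj_on (image f) {e \<in> edges H. w \<in> e}"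
    using inj_on_image_Pow[OF assms(3)] inj_on_subset by blast
  moreover have "image f ` {e \<in> edges H. w \<in> e} \<subseteq> {e \<in> edges F. f w \<in> e}"
    using assms(4) by blast
  moreover have "finite {e \<in> edges F. f w \<in> e}" using assms(2) by simp
  ultimately show ?thesis unfolding degree_def by (rule card_inj_on_le)
qed

lemma arrows_matching_card_edges_ge:
  assumes "simple_graph H" "finite (edges F)" "arrows F (matching t) H"
  shows "t * degree H w \<le> card (edges F)"
  using assms(2,3)
proof (induction t arbitrary: F)
  case 0
  then show ?case by simp
next
  case (Suc t)
  have "\<not> has_copy (matching (Suc t)) (verts F) {}"
    by (auto elim: has_copy_matchingD)
  then have "has_copy H (verts F) (edges F)"
    using Suc.prems(2)[unfolded arrows_def, rule_format, of "{}"] by simp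
  then obtain f where "inj_on f (verts H)" "\<forall>e\<in>edges H. f ` e \<in> edges F"
    unfolding has_copy_def by blast
  then have "degree H w \<le> degree F (f w)"
    using degree_le_degree_of_copy[OF assms(1) Suc.prems(1)] by blast
  moreover have "t * degree H w \<le> card (edges (delete_edges_at F (f w)))"
    using Suc.prems by (intro Suc.IH arrows_delete_edges_at) (auto simp: edges_delete_edges_at)
  ultimately show ?case
    using card_edges_delete_edges_at[OF Suc.prems(1), of "f w"] by simp
qed

lemma size_ramsey_matching_ge:
  assumes "simple_graph (H :: nat graph)"
  shows "t * degree H w \<le> size_ramsey (matching t) H"
proof -
  obtain F :: "nat graph" where "simple_graph F" "arrows F (matching t) H"
      "card (edges F) = size_ramsey (matching t) H"
    using size_ramsey_matching_attained[OF assms] .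
  then show ?thesis
    using arrows_matching_card_edges_ge[OF assms finite_edges_if_simple] by metis
qed

section \<open>Fekete's lemma\<close>

lemma subadditive_mult_le:
  fixes u :: "nat \<Rightarrow> real"
  assumes "\<And>m n. u (m + n) \<le> u m + u n"
  shows "u (q * k) \<le> u 0 + real q * u k"
proof (induction q)
  case (Suc q)
  have "u (Suc q * k) \<le> u k + u (q * k)"
    using assms[of k "q * k"] by simp
  with Suc.IH show ?case by (simp add: algebra_simps)
qed simp

lemma subadditive_div_tendsto_Inf:
  fixes u :: "nat \<Rightarrow> real"
  assumes sub: "\<And>m n. u (m + n) \<le> u m + u n" and nonneg: "\<And>n. 0 \<le> u n"
  shows "(\<lambda>n. u n / real n) \<longlonglongrightarrow> (INF n\<in>{1..}. u n / real n)"
proof -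
  define L where "L = (INF n\<in>{1..}. u n / real n)"
  have bdd: "bdd_below ((\<lambda>n. u n / real n) ` {1..})"
    using nonneg by (intro bdd_belowI2[of _ 0]) simp
  have "(\<lambda>n. u n / real n) \<longlonglongrightarrow> L"
  proof (rule order_tendstoI)
    fix a
    assume "a < L"
    then have "a < u n / real n" if "n \<ge> 1" for n
      using cINF_lower[OF bdd, of n] that unfolding L_def by simp
    then show "eventually (\<lambda>n. a < u n / real n) sequentially"
      unfolding eventually_sequentially by blast
  next
    fix a
    assume "L < a"
    then obtain k where k: "k \<ge> 1" "u k / real k < (L + a) / 2"
      using cINF_less_iff[OF _ bdd, of "(L + a) / 2"] unfolding L_def by auto
    define C where "C = u 0 + Max (u ` {..<k})"
    have bound: "u n / real n \<le> u k / real k + C / real n" if "n \<ge> k" for n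
    proof -
      define q m where "q = n div k" and "m = n mod k"
      have n: "n = q * k + m" "m < k" "real n > 0"
        using k(1) that unfolding q_def m_def by auto
      have "u n \<le> u (q * k) + u m"
        using sub n(1) by simp
      also have "\<dots> \<le> real q * u k + C"
      proof -
        have "u m \<le> Max (u ` {..<k})"
          using n(2) by (intro Max_ge) auto
        then show ?thesis
          using subadditive_mult_le[OF sub, of q k] unfolding C_def by linarith
      qed
      also have "real q * u k = (real (q * k) / real k) * u k"
        using k(1) by simp
      also have "\<dots> \<le> (real n / real k) * u k"
        using n(1) nonneg[of k] by (intro mult_right_mono divide_right_mono) auto
      finally show ?thesis
        using n(3) by (simp add: field_simps)
    qed
    have "eventually (\<lambda>n. C / real n < (a - L) / 2) sequentially"
      by (rule order_tendstoD(2)[OF lim_const_over_n]) (use \<open>L < a\<close> in simp)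
    then show "eventually (\<lambda>n. u n / real n < a) sequentially"
      using eventually_ge_at_top[of k]
    proof (rule eventually_elim2)
      fix n assume "C / real n < (a - L) / 2" "n \<ge> k"
      then show "u n / real n < a"
        using bound[OF \<open>n \<ge> k\<close>] k(2) by argo
    qed
  qed
  then show ?thesis unfolding L_def .
qed

lemma r_infty_LIMSEQ:
  assumes "simple_graph (H :: nat graph)"
  shows "(\<lambda>t. real (size_ramsey (matching t) H) / (real t * real (card (edges H))))
    \<longlonglongrightarrow> r_infty H"
proof -
  define u where "u t = real (size_ramsey (matching t) H)" for t
  have "\<And>m n. u (m + n) \<le> u m + u n"
    unfolding u_def using size_ramsey_matching_add[OF assms] by (simp flip: of_nat_add)
  then have "(\<lambda>t. u t / real t) \<longlonglongrightarrow> (INF n\<in>{1..}. u n / real n)"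
    by (rule subadditive_div_tendsto_Inf) (simp add: u_def)
  then have "(\<lambda>t. u t / real t * inverse (real (card (edges H)))) \<longlonglongrightarrow>
      (INF n\<in>{1..}. u n / real n) * inverse (real (card (edges H)))"
    by (rule tendsto_mult_right)
  then have "convergent (\<lambda>t. u t / (real t * real (card (edges H))))"
    unfolding convergent_def by (auto simp: divide_inverse mult.assoc)
  then show ?thesis
    unfolding r_infty_def u_def by (simp add: convergent_LIMSEQ_iff)
qed

lemma r_infty_le_1:
  assumes "simple_graph (H :: nat graph)"
  shows "r_infty H \<le> 1"
proof (rule LIMSEQ_le_const2[OF r_infty_LIMSEQ[OF assms]])
  have "real (size_ramsey (matching t) H) / (real t * real (card (edges H))) \<le> 1" for t
    (* when t * card (edges H) = 0 the quotient is 0, since x / 0 = 0 *)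
    using size_ramsey_matching_le[OF assms, of t]
    by (cases "t * card (edges H) = 0") (simp_all add: divide_le_eq_1 flip: of_nat_mult)
  then show "\<exists>N. \<forall>t\<ge>N. real (size_ramsey (matching t) H) / (real t * real (card (edges H))) \<le> 1"
    by blast
qed

lemma degree_div_card_edges_le_r_infty:
  assumes "simple_graph (H :: nat graph)"
  shows "real (degree H w) / real (card (edges H)) \<le> r_infty H"
proof (rule LIMSEQ_le_const[OF r_infty_LIMSEQ[OF assms]])
  have "real (degree H w) / real (card (edges H)) \<le>
      real (size_ramsey (matching t) H) / (real t * real (card (edges H)))" if "t \<ge> 1" for t
  proof -
    have "real (degree H w) / real (card (edges H)) =
        real t * real (degree H w) / (real t * real (card (edges H)))"
      using that by simp
    also have "\<dots> \<le> real (size_ramsey (matching t) H) / (real t * real (card (edges H)))"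
      using size_ramsey_matching_ge[OF assms, of t w]
      by (intro divide_right_mono) (simp_all flip: of_nat_mult)
    finally show ?thesis .
  qed
  then show "\<exists>N. \<forall>t\<ge>N. real (degree H w) / real (card (edges H)) \<le>
      real (size_ramsey (matching t) H) / (real t * real (card (edges H)))"
    by blast
qed

section \<open>The broom\<close>

definition broom :: "nat \<Rightarrow> nat graph" where
  "broom N = ({0..<N}, (\<lambda>i. {0, i}) ` {1..N-2} \<union> {{1, N-1}})"

lemma verts_broom: "verts (broom N) = {0..<N}"
  by (simp add: broom_def verts_def)

lemma edges_broom: "edges (broom N) = (\<lambda>i. {0, i}) ` {1..N-2} \<union> {{1, N-1}}"
  by (simp add: broom_def edges_def)

lemma simple_graph_broom: "N \<ge> 4 \<Longrightarrow> simple_graph (broom N)"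
proof -
  assume N: "N \<ge> 4"
  have "\<exists>u v. e = {u, v} \<and> u \<noteq> v \<and> u \<in> {0..<N} \<and> v \<in> {0..<N}"
    if "e \<in> edges (broom N)" for e
  proof -
    from that consider i where "i \<in> {1..N-2}" "e = {0, i}" | "e = {1, N-1}"
      unfolding edges_broom by blast
    then show ?thesis
    proof cases
      case (1 i)
      with N show ?thesis by (intro exI[of _ 0] exI[of _ i]) auto
    next
      case 2
      with N show ?thesis by (intro exI[of _ 1] exI[of _ "N-1"]) auto
    qed
  qed
  then show ?thesis
    unfolding simple_graph_def verts_broom by simp
qed

lemma degree_broom_0: "N \<ge> 4 \<Longrightarrow> degree (broom N) 0 = N - 2"
proof -
  assume "N \<ge> 4"
  then have "{e \<in> edges (broom N). 0 \<in> e} = (\<lambda>i. {0, i}) ` {1..N-2}"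
    unfolding edges_broom by auto
  moreover have "inj_on (\<lambda>i::nat. {0, i}) {1..N-2}"
    by (rule inj_onI) (auto simp: doubleton_eq_iff)
  ultimately show ?thesis
    unfolding degree_def by (simp add: card_image)
qed

lemma card_edges_broom: "N \<ge> 4 \<Longrightarrow> card (edges (broom N)) = N - 1"
proof -
  assume N: "N \<ge> 4"
  have "edges (broom N) = insert {1, N-1} {e \<in> edges (broom N). 0 \<in> e}"
    unfolding edges_broom by auto
  moreover have "{1, N-1} \<notin> {e \<in> edges (broom N). 0 \<in> e}"
    using N by simp
  moreover have "finite {e \<in> edges (broom N). 0 \<in> e}"
    using finite_edges_if_simple[OF simple_graph_broom[OF N]] by simp
  ultimately have "card (edges (broom N)) = Suc (degree (broom N) 0)"
    unfolding degree_def by (metis card_insert_disjoint)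
  then show ?thesis
    using degree_broom_0[OF N] N by simp
qed

lemma max_degree_broom: "N \<ge> 4 \<Longrightarrow> max_degree (broom N) \<le> N - 2"
proof (rule max_degree_le)
  fix v assume N: "N \<ge> 4" and "v \<in> verts (broom N)"
  show "degree (broom N) v \<le> N - 2"
  proof (cases "v = 0")
    case False
    then have "{e \<in> edges (broom N). v \<in> e} \<subseteq> {{0, v}, {1, N-1}}"
      unfolding edges_broom by auto
    then have "degree (broom N) v \<le> card {{0, v}, {1, N-1}}"
      unfolding degree_def by (rule card_mono[rotated]) simp
    also have "\<dots> \<le> 2"
      by (simp add: card_insert_le_m1)
    finally show ?thesis using N by simp
  qed (simp add: degree_broom_0[OF N])
qed (simp add: verts_broom)

lemma connected_graph_broom: "N \<ge> 4 \<Longrightarrow> connected_graph (broom N)"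
proof (rule connected_graphI[where c = 0])
  assume N: "N \<ge> 4"
  then show "verts (broom N) \<noteq> {}"
    unfolding verts_broom by auto
  have "(v, 0) \<in> adj_rel (broom N)" if "v \<in> {1..N-2}" for v
    using that unfolding adj_rel_def edges_broom by (auto simp: insert_commute)
  moreover have "(N - 1, 1) \<in> adj_rel (broom N)"
    unfolding adj_rel_def edges_broom by (auto simp: insert_commute)
  moreover have "1 \<in> {1..N-2}" using N by simp
  ultimately show "(v, 0) \<in> (adj_rel (broom N))\<^sup>*" if "v \<in> verts (broom N)" for v
    using that unfolding verts_broom
    by (cases "v = 0 \<or> v = N - 1") (auto intro: converse_rtrancl_into_rtrancl)
qed

lemma bipartite_broom: "N \<ge> 4 \<Longrightarrow> bipartite (broom N)"
proof -
  assume N: "N \<ge> 4"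
  have "{0, N-1} \<subseteq> verts (broom N)"
    using N unfolding verts_broom by auto
  moreover have "card (e \<inter> {0, N-1}) = 1" if "e \<in> edges (broom N)" for e
  proof -
    have "e \<inter> {0, N-1} = {0} \<or> e \<inter> {0, N-1} = {N-1}"
      using that N unfolding edges_broom by auto
    then show ?thesis by (elim disjE) simp_all
  qed
  ultimately show ?thesis
    unfolding bipartite_def by blast
qed

lemma r_infty_broom_ge: "N \<ge> 4 \<Longrightarrow> 1 - 2 / real N \<le> r_infty (broom N)"
proof -
  assume N: "N \<ge> 4"
  have "1 - 2 / real N = real (N - 2) / real N"
    using N by (simp add: field_simps of_nat_diff)
  also have "\<dots> \<le> real (N - 2) / real (N - 1)"
    using N by (intro divide_left_mono) auto
  also have "\<dots> \<le> r_infty (broom N)"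
    using degree_div_card_edges_le_r_infty[OF simple_graph_broom[OF N], of 0]
    unfolding degree_broom_0[OF N] card_edges_broom[OF N] .
  finally show ?thesis .
qed

theorem corollary3p6:
  shows "\<exists>G :: nat \<Rightarrow> nat graph.
    (\<forall>N\<ge>4. simple_graph (G N) \<and> card (verts (G N)) = N \<and> connected_graph (G N) \<and>
       bipartite (G N) \<and> max_degree (G N) \<le> N - 2) \<and>
    (\<lambda>N. r_infty (G N)) \<longlonglongrightarrow> 1"
proof (intro exI[of _ broom] conjI allI impI)
  fix N :: nat assume "N \<ge> 4"
  then show "simple_graph (broom N)" "card (verts (broom N)) = N" "connected_graph (broom N)"
    "bipartite (broom N)" "max_degree (broom N) \<le> N - 2"
    by (simp_all add: simple_graph_broom verts_broom connected_graph_broom bipartite_broom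
        max_degree_broom)
next
  have lower: "eventually (\<lambda>N. 1 - 2 / real N \<le> r_infty (broom N)) sequentially"
    and upper: "eventually (\<lambda>N. r_infty (broom N) \<le> 1) sequentially"
    using r_infty_broom_ge r_infty_le_1[OF simple_graph_broom]
    unfolding eventually_sequentially by blast+
  have "(\<lambda>N. 1 - 2 / real N) \<longlonglongrightarrow> (1 :: real)"
    using tendsto_diff[OF tendsto_const lim_const_over_n[of 2]] by simp
  from tendsto_sandwich[OF lower upper this tendsto_const]
  show "(\<lambda>N. r_infty (broom N)) \<longlonglongrightarrow> 1" .
qed

end
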